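(* Let $G=(V,E)$ be a connected graph, let $k$ be an integer with $1\le k\le |V|$, and let $D$, $A$, $\rho$, $\alpha$ and $d$ be as described in the context (in particular $|V\setminus D|\ge k$). Let $x$ be an optimal solution of the reduced ILP described in the context. Suppose the solution is sufficient, i.e. for every $v\in V\setminus A$ we have $x_{v,d(v)}=0$ or $d(v)\ge \mathrm{ecc}(v)$. Then $S^*=\{v\in V\setminus D : x_{v,0}=1\}$ satisfies $|S^*|=k$ and $$f(S^* )=\min\{f(S) : S\subseteq V,\ |S|=k\},$$ i.e. $S^*$ is a globally optimal solution of Group Closeness Centrality Maximization; moreover the optimal objective value of the reduced ILP equals $f(S^* )$.
   Context: All graphs are finite, undirected, unweighted, without self-loops, and connected. $\mathrm{dist}(u,v)$ is the shortest-path distance; for $S\subseteq V$ nonempty, $\mathrm{dist}(u,S)=\min_{s\in S}\mathrm{dist}(u,s)$. The group farness is $f(S)=\sum_{u\in V}\mathrm{dist}(u,S)$; Group Closeness Centrality Maximization asks for $S\subseteq V$ with $|S|=k$ maximizing $c(S)=(|V|-|S|)/f(S)$, equivalently minimizing $f(S)$. The eccentricity is $\mathrm{ecc}(v)=\max_{u\in V}\mathrm{dist}(u,v)$. $N[v]$ is the closed neighborhood of $v$; a vertex $u$ dominates $v$ if $N[v]\subseteq N[u]$. Data: (i) $D\subseteq V$ is a set of vertices such that every $v\in D$ is dominated by some vertex $u\in V\setminus D$, and $|V\setminus D|\ge k$. (ii) $A\subseteq D$ is a set of "absorbed" vertices with a map $\rho:A\to V\setminus A$ such that for every $u\in\rho(A)$,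 the set $\rho^{-1}(u)$ is a union of vertex sets of connected components of $G-u$, each such component is contained in $D$, and every vertex $w\in\rho^{-1}(u)$ is dominated by $u$. For $u\in V\setminus A$ let $\alpha(u)=|\rho^{-1}(u)|$ (so $\alpha(u)=0$ if $u\notin\rho(A)$). (iii) $d:V\setminus A\to\mathbb{Z}_{\ge 1}$ is any function. Reduced ILP: binary variables $x_{v,i}\in\{0,1\}$ for $v\in V\setminus A$ and $i\in\{0,\dots,d(v)\}$. Minimize $\sum_{v\in V\setminus A}\sum_{i=0}^{d(v)} x_{v,i}\,(\alpha(v)(i+1)+i)$ subject to (1) $\sum_{v\in V\setminus D} x_{v,0}=k$; (2) $\sum_{i=0}^{d(v)} x_{v,i}=1$ for all $v\in V\setminus A$; (3) $x_{v,i}\le \sum_{w\in V\setminus D:\ \mathrm{dist}(v,w)=i} x_{w,0}$ for all $v\in V\setminus A$ and all $i\in\{0,\dots,d(v)-1\}$ (an empty sum is $0$). The variable $x_{v,d(v)}$ is not subject to constraint (3); it encodes "$\mathrm{dist}(v,S)\ge d(v)$" where $S$ is the selected set. *)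

theory Defs
  imports Main
begin

definition simple_graph :: "'a set \<Rightarrow> ('a \<Rightarrow> 'a \<Rightarrow> bool) \<Rightarrow> bool" where
  "simple_graph V E \<longleftrightarrow> finite V \<and>
     (\<forall>u v. E u v \<longrightarrow> u \<in> V \<and> v \<in> V \<and> u \<noteq> v \<and> E v u)"

inductive walk_in :: "('a \<Rightarrow> 'a \<Rightarrow> bool) \<Rightarrow> 'a set \<Rightarrow> 'a \<Rightarrow> 'a \<Rightarrow> nat \<Rightarrow> bool"
  for E W where
  walk_nil: "u \<in> W \<Longrightarrow> walk_in E W u u 0"
| walk_cons: "E u w \<Longrightarrow> u \<in> W \<Longrightarrow> walk_in E W w v n \<Longrightarrow> walk_in E W u v (Suc n)"

definition connected_graph :: "'a set \<Rightarrow> ('a \<Rightarrow> 'a \<Rightarrow> bool) \<Rightarrow> bool" where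
  "connected_graph V E \<longleftrightarrow> simple_graph V E \<and> V \<noteq> {} \<and>
     (\<forall>u\<in>V. \<forall>v\<in>V. \<exists>n. walk_in E V u v n)"

definition gdist :: "'a set \<Rightarrow> ('a \<Rightarrow> 'a \<Rightarrow> bool) \<Rightarrow> 'a \<Rightarrow> 'a \<Rightarrow> nat" where
  "gdist V E u v = (LEAST n. walk_in E V u v n)"

text \<open>dist(u,S) for nonempty S.\<close>
definition gdist_set :: "'a set \<Rightarrow> ('a \<Rightarrow> 'a \<Rightarrow> bool) \<Rightarrow> 'a \<Rightarrow> 'a set \<Rightarrow> nat" where
  "gdist_set V E u S = Min ((\<lambda>s. gdist V E u s) ` S)"

definition farness :: "'a set \<Rightarrow> ('a \<Rightarrow> 'a \<Rightarrow> bool) \<Rightarrow> 'a set \<Rightarrow> nat" where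
  "farness V E S = (\<Sum>u\<in>V. gdist_set V E u S)"

definition ecc :: "'a set \<Rightarrow> ('a \<Rightarrow> 'a \<Rightarrow> bool) \<Rightarrow> 'a \<Rightarrow> nat" where
  "ecc V E v = Max ((\<lambda>u. gdist V E u v) ` V)"

definition closed_nbhd :: "('a \<Rightarrow> 'a \<Rightarrow> bool) \<Rightarrow> 'a \<Rightarrow> 'a set" where
  "closed_nbhd E v = insert v {u. E v u}"

definition dominates :: "('a \<Rightarrow> 'a \<Rightarrow> bool) \<Rightarrow> 'a \<Rightarrow> 'a \<Rightarrow> bool" where
  "dominates E u v \<longleftrightarrow> closed_nbhd E v \<subseteq> closed_nbhd E u"

definition comp_minus :: "'a set \<Rightarrow> ('a \<Rightarrow> 'a \<Rightarrow> bool) \<Rightarrow> 'a \<Rightarrow> 'a \<Rightarrow> 'a set" where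
  "comp_minus V E u w = {z. \<exists>n. walk_in E (V - {u}) w z n}"

definition valid_D :: "'a set \<Rightarrow> ('a \<Rightarrow> 'a \<Rightarrow> bool) \<Rightarrow> nat \<Rightarrow> 'a set \<Rightarrow> bool" where
  "valid_D V E k D \<longleftrightarrow> D \<subseteq> V \<and> (\<forall>v\<in>D. \<exists>u\<in>V - D. dominates E u v) \<and> card (V - D) \<ge> k"

definition valid_absorb ::
  "'a set \<Rightarrow> ('a \<Rightarrow> 'a \<Rightarrow> bool) \<Rightarrow> 'a set \<Rightarrow> 'a set \<Rightarrow> ('a \<Rightarrow> 'a) \<Rightarrow> bool" where
  "valid_absorb V E D A \<rho> \<longleftrightarrow> A \<subseteq> D \<and> \<rho> ` A \<subseteq> V - A \<and>
     (\<forall>u\<in>\<rho> ` A.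
        (\<forall>w\<in>{w\<in>A. \<rho> w = u}.
            comp_minus V E u w \<subseteq> {w'\<in>A. \<rho> w' = u} \<and>
            comp_minus V E u w \<subseteq> D \<and>
            dominates E u w))"

definition alpha :: "'a set \<Rightarrow> ('a \<Rightarrow> 'a) \<Rightarrow> 'a \<Rightarrow> nat" where
  "alpha A \<rho> u = card {w\<in>A. \<rho> w = u}"

text \<open>Reduced ILP. x v i is the 0/1 variable x_{v,i}; only v in V - A, i in {0..d v} matter.\<close>
definition ilp_feasible ::
  "'a set \<Rightarrow> ('a \<Rightarrow> 'a \<Rightarrow> bool) \<Rightarrow> nat \<Rightarrow> 'a set \<Rightarrow> 'a set \<Rightarrow> ('a \<Rightarrow> nat)
     \<Rightarrow> ('a \<Rightarrow> nat \<Rightarrow> nat) \<Rightarrow> bool" where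
  "ilp_feasible V E k D A d x \<longleftrightarrow>
     (\<forall>v\<in>V - A. \<forall>i\<in>{0..d v}. x v i \<in> {0, 1}) \<and>
     (\<Sum>v\<in>V - D. x v 0) = k \<and>
     (\<forall>v\<in>V - A. (\<Sum>i=0..d v. x v i) = 1) \<and>
     (\<forall>v\<in>V - A. \<forall>i\<in>{0..<d v}.
        x v i \<le> (\<Sum>w\<in>{w\<in>V - D. gdist V E v w = i}. x w 0))"

definition ilp_objective ::
  "'a set \<Rightarrow> 'a set \<Rightarrow> ('a \<Rightarrow> 'a) \<Rightarrow> ('a \<Rightarrow> nat) \<Rightarrow> ('a \<Rightarrow> nat \<Rightarrow> nat) \<Rightarrow> nat" where
  "ilp_objective V A \<rho> d x =
     (\<Sum>v\<in>V - A. \<Sum>i=0..d v. x v i * (alpha A \<rho> v * (i + 1) + i))"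

definition ilp_optimal ::
  "'a set \<Rightarrow> ('a \<Rightarrow> 'a \<Rightarrow> bool) \<Rightarrow> nat \<Rightarrow> 'a set \<Rightarrow> 'a set \<Rightarrow> ('a \<Rightarrow> 'a) \<Rightarrow> ('a \<Rightarrow> nat)
     \<Rightarrow> ('a \<Rightarrow> nat \<Rightarrow> nat) \<Rightarrow> bool" where
  "ilp_optimal V E k D A \<rho> d x \<longleftrightarrow> ilp_feasible V E k D A d x \<and>
     (\<forall>y. ilp_feasible V E k D A d y \<longrightarrow> ilp_objective V A \<rho> d x \<le> ilp_objective V A \<rho> d y)"

end

theory Submission
  imports Defs
begin

text \<open>
  Exchanging a vertex of D in a k-set for a dominating vertex outside D (or, if that vertex is
  already chosen, for any unchosen vertex of V - D) does not increase the farness, so some optimal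
  k-set avoids D. For S \<subseteq> V - D, an absorbed vertex w reaches S only through the cut vertex \<rho> w,
  so dist(w,S) = dist(\<rho> w,S) + 1 and f(S) becomes a weighted sum over V - A. Setting x(v,i) = 1
  for i = min (dist(v,S)) (d v) gives a feasible solution of objective at most f(S). Conversely,
  if x(v,j) = 1 then dist(v,S*) \<le> j: for j < d v by the covering constraint (3), for j = d v
  by sufficiency. Hence f(S*) \<le> obj(x) \<le> f(S) for every k-set S \<subseteq> V - D.
\<close>

lemma walk_in_snoc:
  "walk_in E W u v n \<Longrightarrow> E v w \<Longrightarrow> w \<in> W \<Longrightarrow> walk_in E W u w (Suc n)"
  by (induction rule: walk_in.induct) (auto intro: walk_in.intros)

lemma walk_in_rev:
  assumes "\<And>a b. E a b \<Longrightarrow> E b a"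
  shows "walk_in E W u v n \<Longrightarrow> walk_in E W v u n"
  by (induction rule: walk_in.induct) (auto intro: walk_in.walk_nil walk_in_snoc assms)

lemma connected_graph_finite: "connected_graph V E \<Longrightarrow> finite V"
  unfolding connected_graph_def simple_graph_def by blast

lemma connected_graph_edgeD:
  assumes "connected_graph V E" "E a b"
  shows "a \<in> V" "b \<in> V" "a \<noteq> b" "E b a"
  using assms unfolding connected_graph_def simple_graph_def by blast+

lemma dominates_imp_edge: "dominates E u v \<Longrightarrow> u \<noteq> v \<Longrightarrow> E u v"
  unfolding dominates_def closed_nbhd_def by auto

lemma gdist_walk:
  "connected_graph V E \<Longrightarrow> u \<in> V \<Longrightarrow> v \<in> V \<Longrightarrow> walk_in E V u v (gdist V E u v)"
  unfolding gdist_def connected_graph_def by (meson LeastI_ex)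

lemma gdist_le_walk: "walk_in E V u v n \<Longrightarrow> gdist V E u v \<le> n"
  unfolding gdist_def by (rule Least_le)

lemma gdist_commute:
  assumes "connected_graph V E"
  shows "gdist V E u v = gdist V E v u"
proof -
  have "walk_in E V u v = walk_in E V v u"
    using walk_in_rev[of E] connected_graph_edgeD(4)[OF assms] by blast
  then show ?thesis
    unfolding gdist_def by simp
qed

lemma gdist_eq_0_iff:
  assumes "connected_graph V E" "u \<in> V" "v \<in> V"
  shows "gdist V E u v = 0 \<longleftrightarrow> u = v"
proof
  assume "gdist V E u v = 0"
  then have "walk_in E V u v 0"
    using gdist_walk[OF assms] by simp
  then show "u = v"
    by (cases rule: walk_in.cases) auto
next
  assume "u = v"
  then show "gdist V E u v = 0"
    using gdist_le_walk[OF walk_in.walk_nil[OF assms(2)]] by simp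
qed

lemma gdist_edge_le:
  assumes "connected_graph V E" "E w u" "s \<in> V"
  shows "gdist V E w s \<le> Suc (gdist V E u s)"
proof -
  have "walk_in E V u s (gdist V E u s)"
    using gdist_walk connected_graph_edgeD assms by metis
  then have "walk_in E V w s (Suc (gdist V E u s))"
    using walk_in.walk_cons connected_graph_edgeD assms by metis
  then show ?thesis
    by (rule gdist_le_walk)
qed

lemma gdist_dominator_le:
  assumes c: "connected_graph V E" and dom: "dominates E u v" "u \<noteq> v"
    and V: "u \<in> V" "v \<in> V" "z \<in> V" and "z \<noteq> v"
  shows "gdist V E z u \<le> gdist V E z v"
proof -
  have "walk_in E V v z (gdist V E v z)"
    using gdist_walk c V by metis
  then have "gdist V E u z \<le> gdist V E v z"
  proof (cases rule: walk_in.cases)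
    case walk_nil
    then show ?thesis using \<open>z \<noteq> v\<close> by simp
  next
    case (walk_cons y m)
    have "y = u \<or> E u y"
      using dom walk_cons unfolding dominates_def closed_nbhd_def by auto
    then have "walk_in E V u z m \<or> walk_in E V u z (Suc m)"
      using walk_cons walk_in.walk_cons V by metis
    then show ?thesis
      using walk_cons gdist_le_walk by fastforce
  qed
  then show ?thesis
    using gdist_commute[OF c] by metis
qed

lemma gdist_set_le: "finite S \<Longrightarrow> s \<in> S \<Longrightarrow> gdist_set V E z S \<le> gdist V E z s"
  unfolding gdist_set_def by simp

lemma gdist_set_attained:
  assumes "finite S" "S \<noteq> {}"
  obtains s where "s \<in> S" "gdist_set V E z S = gdist V E z s"
proof -
  have "Min ((\<lambda>s. gdist V E z s) ` S) \<in> (\<lambda>s. gdist V E z s) ` S"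
    using assms by (intro Min_in) auto
  then show ?thesis
    using that unfolding gdist_set_def by auto
qed

lemma gdist_set_eq_0_iff:
  assumes "connected_graph V E" "z \<in> V" "S \<subseteq> V" "S \<noteq> {}"
  shows "gdist_set V E z S = 0 \<longleftrightarrow> z \<in> S"
proof -
  have "finite S"
    using assms connected_graph_finite finite_subset by metis
  then show ?thesis
    using gdist_set_attained[of S V E z] gdist_set_le[of S z V E z] gdist_eq_0_iff assms
    by (metis le_zero_eq subsetD)
qed

lemma gdist_set_le_ecc:
  assumes "connected_graph V E" "S \<subseteq> V" "S \<noteq> {}"
  shows "gdist_set V E v S \<le> ecc V E v"
proof -
  obtain s where s: "s \<in> S"
    using assms(3) by blast
  have "finite V"
    using connected_graph_finite[OF assms(1)] .
  then have "gdist_set V E v S \<le> gdist V E v s"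
    using gdist_set_le finite_subset assms(2) s by metis
  also have "\<dots> = gdist V E s v"
    using gdist_commute[OF assms(1)] .
  also have "\<dots> \<le> ecc V E v"
    unfolding ecc_def using \<open>finite V\<close> s assms(2) by (intro Max_ge) auto
  finally show ?thesis .
qed

lemma gdist_set_mono:
  assumes "finite S" "S \<noteq> {}" "finite S'" "\<forall>s\<in>S. \<exists>s'\<in>S'. gdist V E z s' \<le> gdist V E z s"
  shows "gdist_set V E z S' \<le> gdist_set V E z S"
proof -
  obtain s where "s \<in> S" "gdist_set V E z S = gdist V E z s"
    using gdist_set_attained assms(1,2) by metis
  moreover obtain s' where "s' \<in> S'" "gdist V E z s' \<le> gdist V E z s"
    using assms(4) \<open>s \<in> S\<close> by metis
  ultimately show ?thesis
    using gdist_set_le[OF assms(3) \<open>s' \<in> S'\<close>, of V E z] by linarith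
qed

lemma gdist_set_exchange_le:
  assumes c: "connected_graph V E" and S: "S \<subseteq> V" and v: "v \<in> S" and t: "t \<in> V - S"
    and u: "u \<in> insert t (S - {v})" and dom: "dominates E u v" "u \<noteq> v" and z: "z \<in> V"
  shows "gdist_set V E z (insert t (S - {v})) + (if z = t then 1 else 0)
    \<le> gdist_set V E z S + (if z = v then 1 else 0)"
proof -
  let ?S' = "insert t (S - {v})"
  have fS: "finite S" and fS': "finite ?S'" and S'_V: "?S' \<subseteq> V"
    using S t connected_graph_finite[OF c] finite_subset by auto
  have uV: "u \<in> V" and vV: "v \<in> V" and tv: "t \<noteq> v"
    using u S t v by auto
  consider "z = t" | "z = v" | "z \<noteq> t" "z \<noteq> v"
    by blast
  then show ?thesis
  proof cases
    case 1
    have "gdist_set V E z ?S' = 0" "gdist_set V E z S \<noteq> 0"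
      using gdist_set_eq_0_iff[OF c z] S S'_V t v 1 by auto
    then show ?thesis
      using 1 tv by simp
  next
    case 2
    have "gdist_set V E z ?S' \<le> gdist V E v u"
      using gdist_set_le[OF fS'] u 2 by simp
    also have "\<dots> \<le> Suc (gdist V E u u)"
      using gdist_edge_le[OF c _ uV] connected_graph_edgeD(4)[OF c] dominates_imp_edge dom
      by metis
    also have "\<dots> = 1"
      using gdist_eq_0_iff[OF c uV uV] by simp
    finally show ?thesis
      using 2 tv by simp
  next
    case 3
    have "\<forall>s\<in>S. \<exists>s'\<in>?S'. gdist V E z s' \<le> gdist V E z s"
      using gdist_dominator_le[OF c dom uV vV z 3(2)] u by blast
    then have "gdist_set V E z ?S' \<le> gdist_set V E z S"
      using gdist_set_mono[OF fS _ fS'] v by blast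
    then show ?thesis
      using 3 by simp
  qed
qed

lemma farness_exchange_le:
  assumes c: "connected_graph V E" and S: "S \<subseteq> V" and v: "v \<in> S" and t: "t \<in> V - S"
    and u: "u \<in> insert t (S - {v})" and dom: "dominates E u v" "u \<noteq> v"
  shows "farness V E (insert t (S - {v})) \<le> farness V E S"
proof -
  let ?S' = "insert t (S - {v})"
  have fV: "finite V"
    using connected_graph_finite[OF c] .
  \<comment> \<open>t moves from distance at least 1 to distance 0, v possibly from 0 to 1.\<close>
  have "farness V E ?S' + 1 = (\<Sum>z\<in>V. gdist_set V E z ?S' + (if z = t then 1 else 0))"
    using t fV unfolding farness_def by (simp add: sum.distrib)
  also have "\<dots> \<le> (\<Sum>z\<in>V. gdist_set V E z S + (if z = v then 1 else 0))"
    using gdist_set_exchange_le[OF assms] by (intro sum_mono)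
  also have "\<dots> = farness V E S + 1"
    using S v fV unfolding farness_def by (auto simp: sum.distrib)
  finally show ?thesis
    by simp
qed

lemma farness_exchange_step:
  assumes c: "connected_graph V E" and D: "valid_D V E (card S) D"
    and S: "S \<subseteq> V" and v: "v \<in> S \<inter> D"
  obtains S' where "S' \<subseteq> V" "card S' = card S" "S' \<inter> D = S \<inter> D - {v}"
    "farness V E S' \<le> farness V E S"
proof -
  obtain u where u: "u \<in> V - D" "dominates E u v"
    using D v unfolding valid_D_def by blast
  have fS: "finite S"
    using S connected_graph_finite[OF c] finite_subset by blast
  \<comment> \<open>If u is already in S, then S \<inter> (V - D) \<subseteq> S - {v} is smaller than V - D.\<close>
  obtain t where t: "t \<in> V - D" "t \<notin> S" "u \<in> insert t (S - {v})"
  proof (cases "u \<in> S")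
    case True
    have "card (S \<inter> (V - D)) \<le> card (S - {v})"
      using fS v by (intro card_mono) auto
    also have "\<dots> < card (V - D)"
      using fS v D card_gt_0_iff[of S] unfolding valid_D_def by auto
    finally have "\<not> V - D \<subseteq> S"
      by (metis Int_absorb1 order.irrefl)
    then show ?thesis
      using that True u v by blast
  qed (use that u in blast)
  show ?thesis
  proof
    show "insert t (S - {v}) \<subseteq> V" "insert t (S - {v}) \<inter> D = S \<inter> D - {v}"
      using S t by auto
    show "card (insert t (S - {v})) = card S"
      using fS t v card_gt_0_iff[of S] by auto
    show "farness V E (insert t (S - {v})) \<le> farness V E S"
      using farness_exchange_le[OF c S _ _ t(3) u(2)] v t u by blast
  qed
qed

lemma farness_le_avoiding_dominated:
  assumes c: "connected_graph V E" and D: "valid_D V E k D" and S: "S \<subseteq> V" "card S = k"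
  shows "\<exists>S'. S' \<subseteq> V - D \<and> card S' = k \<and> farness V E S' \<le> farness V E S"
  using S
proof (induction "card (S \<inter> D)" arbitrary: S rule: less_induct)
  case less
  show ?case
  proof (cases "S \<inter> D = {}")
    case True
    then show ?thesis
      using less.prems by blast
  next
    case False
    then obtain v where v: "v \<in> S \<inter> D"
      by blast
    obtain S1 where S1: "S1 \<subseteq> V" "card S1 = card S" "S1 \<inter> D = S \<inter> D - {v}"
      "farness V E S1 \<le> farness V E S"
      using farness_exchange_step[OF c _ less.prems(1) v] D less.prems(2) by metis
    have "finite (S \<inter> D)"
      using less.prems(1) connected_graph_finite[OF c] finite_subset by blast
    then have "card (S1 \<inter> D) < card (S \<inter> D)"
      using S1(3) v by (metis card_Diff1_less)
    then show ?thesis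
      using less.hyps S1 less.prems(2) le_trans by metis
  qed
qed

lemma walk_in_leaving_component:
  assumes c: "connected_graph V E"
  shows "walk_in E V a b n \<Longrightarrow> a \<in> comp_minus V E u w \<Longrightarrow> b \<notin> comp_minus V E u w
     \<Longrightarrow> \<exists>m < n. walk_in E V u b m"
proof (induction rule: walk_in.induct)
  case (walk_nil a)
  then show ?case
    by blast
next
  case (walk_cons a a' b n)
  show ?case
  proof (cases "a' = u")
    case True
    then show ?thesis
      using walk_cons by blast
  next
    case False
    then have "a' \<in> comp_minus V E u w"
      using walk_cons connected_graph_edgeD(2)[OF c] walk_in_snoc
      unfolding comp_minus_def by fastforce
    then show ?thesis
      using walk_cons less_Suc_eq by blast
  qed
qed

lemma gdist_via_cut_vertex:
  assumes c: "connected_graph V E" and "E w u" and s: "s \<in> V" "s \<notin> comp_minus V E u w"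
  shows "gdist V E w s = gdist V E u s + 1"
proof (rule antisym)
  show "gdist V E w s \<le> gdist V E u s + 1"
    using gdist_edge_le[OF c \<open>E w u\<close> s(1)] by simp
  have wV: "w \<in> V" and "w \<noteq> u"
    using connected_graph_edgeD[OF c \<open>E w u\<close>] by auto
  then have "w \<in> comp_minus V E u w"
    unfolding comp_minus_def by (blast intro: walk_in.walk_nil)
  then obtain m where "m < gdist V E w s" "walk_in E V u s m"
    using walk_in_leaving_component[OF c gdist_walk[OF c wV s(1)]] s(2) by blast
  then show "gdist V E u s + 1 \<le> gdist V E w s"
    using gdist_le_walk by fastforce
qed

lemma valid_absorb_subset: "valid_absorb V E D A \<rho> \<Longrightarrow> A \<subseteq> D"
  unfolding valid_absorb_def by blast

lemma gdist_set_absorbed: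
  assumes c: "connected_graph V E" and A: "valid_absorb V E D A \<rho>" "A \<subseteq> V"
    and w: "w \<in> A" and S: "S \<subseteq> V - D" "S \<noteq> {}"
  shows "gdist_set V E w S = gdist_set V E (\<rho> w) S + 1"
proof -
  let ?u = "\<rho> w"
  have fS: "finite S"
    using S connected_graph_finite[OF c] finite_subset by blast
  have u: "?u \<notin> A" "comp_minus V E ?u w \<subseteq> D" "dominates E ?u w"
    using A(1) w unfolding valid_absorb_def by auto
  then have "E w ?u"
    using dominates_imp_edge connected_graph_edgeD(4)[OF c] w by metis
  \<comment> \<open>The component of w in G - \<rho> w lies in D, hence misses S.\<close>
  then have "gdist V E w s = gdist V E ?u s + 1" if "s \<in> S" for s
    using gdist_via_cut_vertex[OF c] u(2) S that by blast
  then have "gdist_set V E w S = Min ((\<lambda>n. n + 1) ` (\<lambda>s. gdist V E ?u s) ` S)"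
    unfolding gdist_set_def image_image by (metis (no_types, lifting) image_cong)
  also have "\<dots> = Min ((\<lambda>s. gdist V E ?u s) ` S) + 1"
    using fS S by (intro mono_Min_commute[symmetric]) (auto simp: mono_def)
  finally show ?thesis
    unfolding gdist_set_def .
qed

lemma farness_eq_absorbed_sum:
  assumes c: "connected_graph V E" and D: "valid_D V E k D" and A: "valid_absorb V E D A \<rho>"
    and S: "S \<subseteq> V - D" "S \<noteq> {}"
  shows "farness V E S
    = (\<Sum>v\<in>V - A. alpha A \<rho> v * (gdist_set V E v S + 1) + gdist_set V E v S)"
proof -
  let ?g = "\<lambda>z. gdist_set V E z S"
  have fV: "finite V"
    using connected_graph_finite[OF c] .
  have AV: "A \<subseteq> V"
    using valid_absorb_subset[OF A] D unfolding valid_D_def by blast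
  have fA: "finite A"
    using AV fV finite_subset by blast
  have "farness V E S = sum ?g (V - A) + sum ?g A"
    unfolding farness_def by (rule sum.subset_diff[OF AV fV])
  also have "sum ?g A = (\<Sum>w\<in>A. ?g (\<rho> w) + 1)"
    using gdist_set_absorbed[OF c A AV _ S] by simp
  also have "\<dots> = (\<Sum>u\<in>\<rho> ` A. \<Sum>w\<in>{w\<in>A. \<rho> w = u}. ?g u + 1)"
    by (subst sum.image_gen[OF fA]) (auto intro!: sum.cong)
  also have "\<dots> = (\<Sum>u\<in>\<rho> ` A. alpha A \<rho> u * (?g u + 1))"
    unfolding alpha_def by simp
  also have "\<dots> = (\<Sum>u\<in>V - A. alpha A \<rho> u * (?g u + 1))"
  proof (intro sum.mono_neutral_left ballI)
    fix u
    assume "u \<in> V - A - \<rho> ` A"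
    then have "{w\<in>A. \<rho> w = u} = {}"
      by blast
    then show "alpha A \<rho> u * (?g u + 1) = 0"
      unfolding alpha_def by (metis card.empty mult_0)
  qed (use A fV in \<open>auto simp: valid_absorb_def\<close>)
  finally show ?thesis
    by (simp add: sum.distrib add.commute)
qed

lemma binary_sum_eq_1_obtains:
  fixes f :: "'b \<Rightarrow> nat"
  assumes "finite I" "\<forall>i\<in>I. f i \<in> {0, 1}" "sum f I = 1"
  obtains j where "j \<in> I" "f j = 1" "\<And>c. (\<Sum>i\<in>I. f i * c i) = c j"
proof -
  obtain j where j: "j \<in> I" "f j \<noteq> 0"
    using assms(3) by (metis sum.neutral zero_neq_one)
  then have "f j = 1"
    using assms(2) by auto
  moreover have "sum f I = f j + sum f (I - {j})"
    using sum.remove[OF assms(1) j(1)] .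
  ultimately have "\<forall>i\<in>I - {j}. f i = 0"
    using assms(1,3) by simp
  then have "(\<Sum>i\<in>I. f i * c i) = c j" for c :: "'b \<Rightarrow> nat"
    using assms(1) j(1) \<open>f j = 1\<close> by (subst sum.remove[of _ j]) auto
  then show ?thesis
    using that j(1) \<open>f j = 1\<close> by blast
qed

definition induced_solution ::
  "'a set \<Rightarrow> ('a \<Rightarrow> 'a \<Rightarrow> bool) \<Rightarrow> 'a set \<Rightarrow> ('a \<Rightarrow> nat) \<Rightarrow> 'a \<Rightarrow> nat \<Rightarrow> nat" where
  "induced_solution V E S d v i = (if i = min (gdist_set V E v S) (d v) then 1 else 0)"

lemma induced_solution_0:
  assumes "connected_graph V E" "S \<subseteq> V" "S \<noteq> {}" "v \<in> V" "d v \<ge> 1"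
  shows "induced_solution V E S d v 0 = (if v \<in> S then 1 else 0)"
  using gdist_set_eq_0_iff[OF assms(1,4,2,3)] assms(5)
  unfolding induced_solution_def by auto

lemma ilp_feasible_induced_solution:
  assumes c: "connected_graph V E" and S: "S \<subseteq> V - D" "S \<noteq> {}" "card S = k"
    and AD: "A \<subseteq> D" and d_pos: "\<forall>v\<in>V - A. d v \<ge> 1"
  shows "ilp_feasible V E k D A d (induced_solution V E S d)"
proof -
  let ?y = "induced_solution V E S d"
  have fV: "finite V"
    using connected_graph_finite[OF c] .
  have y0: "?y v 0 = (if v \<in> S then 1 else 0)" if "v \<in> V - D" for v
    using induced_solution_0[OF c _ S(2)] S(1) d_pos AD that by blast
  have "(\<Sum>v\<in>V - D. ?y v 0) = (\<Sum>v\<in>V - D. if v \<in> S then 1 else 0)"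
    using y0 by simp
  also have "\<dots> = card S"
    using fV S(1) by (simp add: sum.If_cases Int_absorb1)
  finally have selected: "(\<Sum>v\<in>V - D. ?y v 0) = k"
    using S(3) by simp
  have covered: "?y v i \<le> (\<Sum>w\<in>{w\<in>V - D. gdist V E v w = i}. ?y w 0)"
    if i: "i \<in> {0..<d v}" for v i
  proof (cases "i = min (gdist_set V E v S) (d v)")
    case True
    obtain s where s: "s \<in> S" "gdist_set V E v S = gdist V E v s"
      using gdist_set_attained S(1,2) fV finite_subset by (metis Diff_subset)
    then have "s \<in> {w\<in>V - D. gdist V E v w = i}" and "?y s 0 = 1"
      using True i S(1) y0 by auto
    then have "1 \<le> (\<Sum>w\<in>{w\<in>V - D. gdist V E v w = i}. ?y w 0)"
      using fV member_le_sum[of s "{w\<in>V - D. gdist V E v w = i}" "\<lambda>w. ?y w 0"] by simp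
    then show ?thesis
      using True by (simp add: induced_solution_def)
  qed (simp add: induced_solution_def)
  have binary: "?y v i \<in> {0, 1}" for v i
    by (simp add: induced_solution_def)
  have one_hot: "(\<Sum>i=0..d v. ?y v i) = 1" for v
    by (simp add: induced_solution_def)
  show ?thesis
    unfolding ilp_feasible_def using binary one_hot selected covered by blast
qed

lemma ilp_objective_induced_solution_le:
  assumes c: "connected_graph V E" and D: "valid_D V E k D" and A: "valid_absorb V E D A \<rho>"
    and S: "S \<subseteq> V - D" "S \<noteq> {}"
  shows "ilp_objective V A \<rho> d (induced_solution V E S d) \<le> farness V E S"
proof -
  let ?g = "\<lambda>v. gdist_set V E v S"
  have "ilp_objective V A \<rho> d (induced_solution V E S d)
      = (\<Sum>v\<in>V - A. alpha A \<rho> v * (min (?g v) (d v) + 1) + min (?g v) (d v))"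
    unfolding ilp_objective_def induced_solution_def
    by (intro sum.cong refl) (simp add: if_distrib[of "\<lambda>a. a * _"] cong: if_cong)
  also have "\<dots> \<le> (\<Sum>v\<in>V - A. alpha A \<rho> v * (?g v + 1) + ?g v)"
    by (intro sum_mono add_mono mult_le_mono) auto
  also have "\<dots> = farness V E S"
    using farness_eq_absorbed_sum[OF c D A S] by simp
  finally show ?thesis .
qed

lemma ilp_feasible_binary_0:
  assumes "ilp_feasible V E k D A d x" "A \<subseteq> D" "v \<in> V - D"
  shows "x v 0 \<in> {0, 1}"
proof -
  have "v \<in> V - A" "0 \<in> {0..d v}"
    using assms(2,3) by auto
  then show ?thesis
    using assms(1) unfolding ilp_feasible_def by blast
qed

lemma card_ilp_selected:
  assumes fV: "finite V" and feas: "ilp_feasible V E k D A d x" and AD: "A \<subseteq> D"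
  shows "card {v\<in>V - D. x v 0 = 1} = k"
proof -
  have "(\<Sum>v\<in>V - D. x v 0) = (\<Sum>v\<in>V - D. if x v 0 = 1 then 1 else 0)"
    using ilp_feasible_binary_0[OF feas AD] by (intro sum.cong) auto
  also have "\<dots> = card {v\<in>V - D. x v 0 = 1}"
    using fV by (simp add: sum.If_cases Int_def)
  finally show ?thesis
    using feas unfolding ilp_feasible_def by simp
qed

lemma gdist_set_ilp_selected_le:
  assumes c: "connected_graph V E" and feas: "ilp_feasible V E k D A d x" and AD: "A \<subseteq> D"
    and v: "v \<in> V - A" and j: "j \<le> d v" "x v j = 1"
    and sufficient: "x v (d v) = 0 \<or> d v \<ge> ecc V E v"
    and nonempty: "{w\<in>V - D. x w 0 = 1} \<noteq> {}"
  shows "gdist_set V E v {w\<in>V - D. x w 0 = 1} \<le> j"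
proof (cases "j < d v")
  case True
  let ?W = "{w\<in>V - D. gdist V E v w = j}"
  have "x v j \<le> (\<Sum>w\<in>?W. x w 0)"
    using feas v True unfolding ilp_feasible_def by auto
  then have "1 \<le> (\<Sum>w\<in>?W. x w 0)"
    using j(2) by simp
  then have "(\<Sum>w\<in>?W. x w 0) \<noteq> 0"
    by linarith
  then obtain w where w: "w \<in> ?W" "x w 0 \<noteq> 0"
    by (meson sum.neutral)
  then have "x w 0 = 1"
    using ilp_feasible_binary_0[OF feas AD, of w] by auto
  moreover have "finite {w\<in>V - D. x w 0 = 1}"
    using connected_graph_finite[OF c] by simp
  ultimately show ?thesis
    using gdist_set_le[of _ w V E v] w by simp
next
  case False
  \<comment> \<open>x(v, d v) has no covering constraint; sufficiency takes its place.\<close>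
  have "gdist_set V E v {w\<in>V - D. x w 0 = 1} \<le> ecc V E v"
    using gdist_set_le_ecc[OF c _ nonempty] by blast
  moreover have "ecc V E v \<le> d v"
    using False j sufficient by simp
  ultimately show ?thesis
    using False j(1) by simp
qed

lemma farness_ilp_selected_le_objective:
  assumes c: "connected_graph V E" and D: "valid_D V E k D" and A: "valid_absorb V E D A \<rho>"
    and feas: "ilp_feasible V E k D A d x"
    and sufficient: "\<forall>v\<in>V - A. x v (d v) = 0 \<or> d v \<ge> ecc V E v"
    and nonempty: "{w\<in>V - D. x w 0 = 1} \<noteq> {}"
  shows "farness V E {w\<in>V - D. x w 0 = 1} \<le> ilp_objective V A \<rho> d x"
proof -
  let ?S = "{w\<in>V - D. x w 0 = 1}"
  let ?g = "\<lambda>v. gdist_set V E v ?S"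
  let ?c = "\<lambda>v i. alpha A \<rho> v * (i + 1) + i"
  have AD: "A \<subseteq> D"
    using valid_absorb_subset[OF A] .
  have "?c v (?g v) \<le> (\<Sum>i=0..d v. x v i * ?c v i)" if v: "v \<in> V - A" for v
  proof -
    have "\<forall>i\<in>{0..d v}. x v i \<in> {0, 1}" "(\<Sum>i=0..d v. x v i) = 1"
      using feas v unfolding ilp_feasible_def by auto
    then obtain j where j: "j \<in> {0..d v}" "x v j = 1" "\<And>c. (\<Sum>i=0..d v. x v i * c i) = c j"
      using binary_sum_eq_1_obtains[of "{0..d v}" "x v"] by blast
    then have "?g v \<le> j"
      using gdist_set_ilp_selected_le[OF c feas AD v _ _ _ nonempty] sufficient v by auto
    then show ?thesis
      using j(3)[of "?c v"] by (simp add: add_mono)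
  qed
  then have "(\<Sum>v\<in>V - A. ?c v (?g v)) \<le> ilp_objective V A \<rho> d x"
    unfolding ilp_objective_def by (rule sum_mono)
  then show ?thesis
    using farness_eq_absorbed_sum[OF c D A Collect_subset nonempty] by simp
qed

lemma ilp_optimal_objective_le_farness:
  assumes c: "connected_graph V E" and D: "valid_D V E k D" and A: "valid_absorb V E D A \<rho>"
    and d_pos: "\<forall>v\<in>V - A. d v \<ge> 1" and opt: "ilp_optimal V E k D A \<rho> d x"
    and S: "S \<subseteq> V - D" "card S = k" and k: "1 \<le> k"
  shows "ilp_objective V A \<rho> d x \<le> farness V E S"
proof -
  have S_nonempty: "S \<noteq> {}"
    using S(2) k by auto
  have "ilp_feasible V E k D A d (induced_solution V E S d)"
    using ilp_feasible_induced_solution[OF c S(1) S_nonempty S(2) valid_absorb_subset[OF A] d_pos] .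
  then have "ilp_objective V A \<rho> d x \<le> ilp_objective V A \<rho> d (induced_solution V E S d)"
    using opt unfolding ilp_optimal_def by blast
  also have "\<dots> \<le> farness V E S"
    using ilp_objective_induced_solution_le[OF c D A S(1) S_nonempty] .
  finally show ?thesis .
qed

lemma farness_eq_Min:
  assumes "finite V" "S\<^sub>0 \<subseteq> V" "card S\<^sub>0 = k"
    and "\<And>S. S \<subseteq> V \<Longrightarrow> card S = k \<Longrightarrow> farness V E S\<^sub>0 \<le> farness V E S"
  shows "farness V E S\<^sub>0 = Min {farness V E S | S. S \<subseteq> V \<and> card S = k}"
proof (rule Min_eqI[symmetric])
  have "{farness V E S | S. S \<subseteq> V \<and> card S = k} \<subseteq> farness V E ` Pow V"
    by blast
  then show "finite {farness V E S | S. S \<subseteq> V \<and> card S = k}"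
    using assms(1) finite_subset by blast
qed (use assms in blast)+

theorem mainTheorem1:
  fixes V :: "'a set" and E :: "'a \<Rightarrow> 'a \<Rightarrow> bool" and k :: nat
    and D A :: "'a set" and \<rho> :: "'a \<Rightarrow> 'a" and d :: "'a \<Rightarrow> nat"
    and x :: "'a \<Rightarrow> nat \<Rightarrow> nat"
  assumes conn: "connected_graph V E"
    and k: "1 \<le> k" "k \<le> card V"
    and D: "valid_D V E k D"
    and A: "valid_absorb V E D A \<rho>"
    and d_pos: "\<forall>v\<in>V - A. d v \<ge> 1"
    and opt: "ilp_optimal V E k D A \<rho> d x"
    and sufficient: "\<forall>v\<in>V - A. x v (d v) = 0 \<or> d v \<ge> ecc V E v"
  shows "card {v\<in>V - D. x v 0 = 1} = k \<and>
         farness V E {v\<in>V - D. x v 0 = 1} = Min {farness V E S | S. S \<subseteq> V \<and> card S = k} \<and>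
         ilp_objective V A \<rho> d x = farness V E {v\<in>V - D. x v 0 = 1}"
proof -
  let ?S = "{v\<in>V - D. x v 0 = 1}"
  have fV: "finite V"
    using connected_graph_finite[OF conn] .
  have feas: "ilp_feasible V E k D A d x"
    using opt unfolding ilp_optimal_def by blast
  have card: "card ?S = k"
    using card_ilp_selected[OF fV feas valid_absorb_subset[OF A]] .
  then have nonempty: "?S \<noteq> {}"
    using k(1) by (metis card.empty not_one_le_zero)
  note upper = ilp_optimal_objective_le_farness[OF conn D A d_pos opt _ _ k(1)]
  have objective: "ilp_objective V A \<rho> d x = farness V E ?S"
    using farness_ilp_selected_le_objective[OF conn D A feas sufficient nonempty]
      upper[OF Collect_subset card] by (simp add: le_antisym)
  have "farness V E ?S \<le> farness V E S" if "S \<subseteq> V" "card S = k" for S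
    using farness_le_avoiding_dominated[OF conn D that] objective upper by (metis le_trans)
  then have "farness V E ?S = Min {farness V E S | S. S \<subseteq> V \<and> card S = k}"
    using farness_eq_Min[OF fV _ card] by blast
  then show ?thesis
    using card objective by simp
qed

end
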